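(* Let $r\ge4$, $l\ge r$, $\alpha,\beta\in\mathbb N$ with $\alpha+\beta=l-(r-2)$, let $N_G=\mathbb Z^r+\mathbb Z\frac1l(1,\ldots,1,\alpha,\beta)^{\intercal}$ (with $r-2$ entries equal to $1$), $\mathfrak L=\{x\in\mathbb R^r:x_1=\cdots=x_{r-2}\}$, $\overline{N_G}=N_G\cap\mathfrak L$ and $\overline{\sigma_0}=\mathrm{pos}(e_1,\ldots,e_r)\cap\mathfrak L$. Then the first primitive lattice point $\mathfrak n_G$ of $\overline{N_G}\setminus\{\mathbf 0\}$ on the ray $\mathbb R_{\ge0}\frac1{r-2}\sum_{i=1}^{r-2}e_i$ is $$\mathfrak n_G=\frac{1}{\gcd(\alpha,\beta,l)}\sum_{i=1}^{r-2}e_i,$$ so that the set of primitive minimal generators of $\overline{\sigma_0}$ is $\{\mathfrak n_G,e_{r-1},e_r\}$, and $$\mu_G:=\min\Big\{\varkappa\in\mathbb Q_{>0}:\varkappa\cdot\frac1{r-2}\sum_{i=1}^{r-2}e_i\in\overline{N_G}\setminus\{\mathbf0\}\Big\}=\frac{r-2}{\gcd(\alpha,\beta,l)}.$$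
   Context: $e_1,\ldots,e_r$ are the standard unit vectors of $\mathbb R^r$. *)

theory Defs
  imports Main Complex_Main
begin

text \<open>Vectors of R^r are modelled as functions nat => real, coordinates indexed by 1..r,
  and zero outside {1..r}.\<close>

definition evec :: "nat \<Rightarrow> nat \<Rightarrow> real" where
  "evec i = (\<lambda>j. if j = i then 1 else 0)"

definition genv :: "nat \<Rightarrow> nat \<Rightarrow> nat \<Rightarrow> nat \<Rightarrow> nat \<Rightarrow> real" where
  "genv r l a b = (\<lambda>j. (if 1 \<le> j \<and> j \<le> r - 2 then 1
                         else if j = r - 1 then real a
                         else if j = r then real b else 0) / real l)"

definition NG :: "nat \<Rightarrow> nat \<Rightarrow> nat \<Rightarrow> nat \<Rightarrow> (nat \<Rightarrow> real) set" where
  "NG r l a b = {x. \<exists>(z::nat \<Rightarrow> int) (k::int).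
      x = (\<lambda>j. (if j \<in> {1..r} then of_int (z j) else 0) + of_int k * genv r l a b j)}"

definition Lsp :: "nat \<Rightarrow> (nat \<Rightarrow> real) set" where
  "Lsp r = {x. (\<forall>j. j \<notin> {1..r} \<longrightarrow> x j = 0) \<and>
               (\<forall>i\<in>{1..r-2}. \<forall>j\<in>{1..r-2}. x i = x j)}"

definition NGbar :: "nat \<Rightarrow> nat \<Rightarrow> nat \<Rightarrow> nat \<Rightarrow> (nat \<Rightarrow> real) set" where
  "NGbar r l a b = NG r l a b \<inter> Lsp r"

definition pos_cone :: "(nat \<Rightarrow> real) set \<Rightarrow> (nat \<Rightarrow> real) set" where
  "pos_cone G = {x. \<exists>S c. finite S \<and> S \<subseteq> G \<and> (\<forall>v\<in>S. c v \<ge> (0::real)) \<and>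
                       x = (\<lambda>j. \<Sum>v\<in>S. c v * v j)}"

definition sigma0bar :: "nat \<Rightarrow> (nat \<Rightarrow> real) set" where
  "sigma0bar r = pos_cone (evec ` {1..r}) \<inter> Lsp r"

definition ray :: "(nat \<Rightarrow> real) \<Rightarrow> (nat \<Rightarrow> real) set" where
  "ray v = {(\<lambda>j. t * v j) | t. t \<ge> 0}"

definition extremal_ray_gen :: "(nat \<Rightarrow> real) set \<Rightarrow> (nat \<Rightarrow> real) \<Rightarrow> bool" where
  "extremal_ray_gen \<sigma> v \<longleftrightarrow> v \<in> \<sigma> \<and> v \<noteq> (\<lambda>_. 0) \<and>
     (\<forall>a\<in>\<sigma>. \<forall>b\<in>\<sigma>. (\<lambda>j. a j + b j) \<in> ray v \<longrightarrow> a \<in> ray v \<and> b \<in> ray v)"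

definition first_lattice_point :: "(nat \<Rightarrow> real) set \<Rightarrow> (nat \<Rightarrow> real) \<Rightarrow> (nat \<Rightarrow> real) \<Rightarrow> bool" where
  "first_lattice_point N v p \<longleftrightarrow>
     (\<exists>t>0. p = (\<lambda>j. t * v j) \<and> p \<in> N - {\<lambda>_. 0} \<and>
        (\<forall>s>0. (\<lambda>j. s * v j) \<in> N - {\<lambda>_. 0} \<longrightarrow> t \<le> s))"

definition primitive_generators :: "(nat \<Rightarrow> real) set \<Rightarrow> (nat \<Rightarrow> real) set \<Rightarrow> (nat \<Rightarrow> real) set" where
  "primitive_generators N \<sigma> = {p. \<exists>v. extremal_ray_gen \<sigma> v \<and> first_lattice_point N v p}"

end

(*
  A point s (e_1 + ... + e_{r-2}) lies in N_G iff s - k/l is an integer for some integer k with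
  l | k alpha and l | k beta; as l | k l anyway, these two divisibilities say l | k gcd(alpha, beta, l),
  i.e. k/l runs through the multiples of 1/gcd(alpha, beta, l). So the lattice points on the diagonal
  ray are exactly the multiples of n_G. On the rays of e_{r-1} and e_r the first coordinate forces
  k/l to be an integer, so there the lattice points are the integer multiples of e_{r-1} and e_r.
  The cone is {x in L : x >= 0}; since cutting a vector of L down to a union of the blocks
  {1..r-2}, {r-1}, {r} stays in the cone, an extremal ray is supported on a single block, which
  leaves exactly the three rays above. Finally mu_G is the scalar of n_G against (1/(r-2)) sum e_i.
*)
theory Submission
  imports Defs
begin

definition ones_upto :: "nat \<Rightarrow> nat \<Rightarrow> real" where
  "ones_upto m = (\<lambda>j. if j \<in> {1..m} then 1 else 0)"

lemma sum_evec_eq_ones_upto: "(\<Sum>i = 1..m. evec i j) = ones_upto m j"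
  by (auto simp: evec_def ones_upto_def)

lemma ones_upto_nonzero: "0 < m \<Longrightarrow> ones_upto m \<noteq> (\<lambda>_. 0)"
  by (auto simp: fun_eq_iff ones_upto_def intro!: exI[of _ 1])

lemma evec_nonzero: "evec i \<noteq> (\<lambda>_. 0)"
  by (auto simp: fun_eq_iff evec_def)

lemma dvd_mult_gcd3_iff:
  fixes a b l k :: int
  shows "l dvd k * a \<and> l dvd k * b \<longleftrightarrow> l dvd k * gcd a (gcd b l)"
proof
  assume "l dvd k * a \<and> l dvd k * b"
  then have "l dvd gcd (k * a) (gcd (k * b) (k * l))"
    by simp
  also have "gcd (k * b) (k * l) = \<bar>k * gcd b l\<bar>"
    by (simp add: gcd_mult_distrib_int[symmetric] abs_mult)
  also have "gcd (k * a) \<bar>k * gcd b l\<bar> = \<bar>k\<bar> * gcd a (gcd b l)"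
    by (simp add: gcd_mult_distrib_int)
  finally show "l dvd k * gcd a (gcd b l)"
    by (metis abs_gcd_int abs_mult dvd_abs_iff)
next
  assume "l dvd k * gcd a (gcd b l)"
  moreover have "k * gcd a (gcd b l) dvd k * a" "k * gcd a (gcd b l) dvd k * b"
    by (simp_all add: mult_dvd_mono dvd_trans[OF gcd_dvd2 gcd_dvd1])
  ultimately show "l dvd k * a \<and> l dvd k * b"
    by (meson dvd_trans)
qed

lemma of_int_mult_divide_in_Ints_iff:
  assumes "0 < l"
  shows "of_int k * real a / real l \<in> \<int> \<longleftrightarrow> int l dvd k * int a"
  using of_int_div_of_int_in_Ints_iff[of "k * int a" "int l", where 'a=real] assms
  by simp

lemma diagonal_scalar_iff:
  fixes a b l :: nat and s :: real
  assumes "0 < l"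
  defines "g \<equiv> gcd a (gcd b l)"
  shows "(\<exists>k::int. s - of_int k / real l \<in> \<int> \<and> int l dvd k * int a \<and> int l dvd k * int b)
         \<longleftrightarrow> s * real g \<in> \<int>"
proof -
  have "g dvd l" unfolding g_def by (meson gcd_dvd2 dvd_trans)
  then obtain m where l: "l = g * m" by (rule dvdE)
  have "0 < g" unfolding g_def using assms(1) by simp
  moreover have "0 < m" using assms(1) l by (simp add: nat_0_less_mult_iff)
  ultimately have lg: "real l = real g * real m" "real g \<noteq> 0" "real m \<noteq> 0"
    using l by simp_all
  have dvd_iff: "int l dvd k * int a \<and> int l dvd k * int b \<longleftrightarrow> int m dvd k" for k :: int
  proof -
    have "int l dvd k * int a \<and> int l dvd k * int b \<longleftrightarrow> int l dvd k * int g"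
      using dvd_mult_gcd3_iff[of "int l" k "int a" "int b"] by (simp add: g_def)
    also have "\<dots> \<longleftrightarrow> int g * int m dvd int g * k"
      by (simp add: l mult.commute)
    also have "\<dots> \<longleftrightarrow> int m dvd k"
      using \<open>0 < g\<close> by simp
    finally show ?thesis .
  qed
  show ?thesis
  proof
    assume "\<exists>k::int. s - of_int k / real l \<in> \<int> \<and> int l dvd k * int a \<and> int l dvd k * int b"
    then obtain k n :: int where "s - of_int k / real l = of_int n" "int m dvd k"
      using dvd_iff by (metis Ints_cases)
    then obtain q where "s - of_int (int m * q) / real l = of_int n"
      by (elim dvdE) simp
    then have "s * real g = of_int (n * int g + q)"
      using lg by (simp add: field_simps)
    then show "s * real g \<in> \<int>"
      by simp
  next
    assume "s * real g \<in> \<int>"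
    then obtain n :: int where n: "s * real g = of_int n" by (elim Ints_cases)
    have "s - of_int (n * int m) / real l = 0"
      using n lg by (simp add: field_simps)
    then show "\<exists>k::int. s - of_int k / real l \<in> \<int> \<and> int l dvd k * int a \<and> int l dvd k * int b"
      using dvd_iff by (metis Ints_0 dvd_triv_right)
  qed
qed

lemma genv_eq_0:
  assumes "2 \<le> r" "j \<notin> {1..r}"
  shows "genv r l a b j = 0"
  using assms by (auto simp: genv_def)

lemma mem_NG_iff:
  assumes "2 \<le> r"
  shows "x \<in> NG r l a b \<longleftrightarrow>
    (\<exists>k::int. (\<forall>j\<in>{1..r}. x j - of_int k * genv r l a b j \<in> \<int>) \<and> (\<forall>j. j \<notin> {1..r} \<longrightarrow> x j = 0))"
proof
  assume "x \<in> NG r l a b"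
  then obtain z k where "x = (\<lambda>j. (if j \<in> {1..r} then of_int (z j) else 0) + of_int k * genv r l a b j)"
    unfolding NG_def by blast
  then show "\<exists>k::int. (\<forall>j\<in>{1..r}. x j - of_int k * genv r l a b j \<in> \<int>) \<and> (\<forall>j. j \<notin> {1..r} \<longrightarrow> x j = 0)"
    by (intro exI[of _ k]) (simp add: genv_eq_0[OF assms])
next
  assume "\<exists>k::int. (\<forall>j\<in>{1..r}. x j - of_int k * genv r l a b j \<in> \<int>) \<and> (\<forall>j. j \<notin> {1..r} \<longrightarrow> x j = 0)"
  then obtain k :: int where k: "\<forall>j\<in>{1..r}. x j - of_int k * genv r l a b j \<in> \<int>"
    and x0: "\<forall>j. j \<notin> {1..r} \<longrightarrow> x j = 0"
    by blast
  define z where "z j = \<lfloor>x j - of_int k * genv r l a b j\<rfloor>" for j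
  have "x = (\<lambda>j. (if j \<in> {1..r} then of_int (z j) else 0) + of_int k * genv r l a b j)"
    using k x0 by (auto simp: z_def of_int_floor genv_eq_0[OF assms])
  then show "x \<in> NG r l a b"
    unfolding NG_def by blast
qed

lemma scaled_ones_upto_mem_NG_iff:
  assumes "3 \<le> r" "0 < l"
  shows "(\<lambda>j. s * ones_upto (r - 2) j) \<in> NG r l a b \<longleftrightarrow> s * real (gcd a (gcd b l)) \<in> \<int>"
proof -
  let ?x = "\<lambda>j. s * ones_upto (r - 2) j"
  have coords: "{1..r} = {1..r - 2} \<union> {r - 1, r}" "1 \<in> {1..r - 2}"
    using assms(1) by auto
  have diag: "?x j - of_int k * genv r l a b j = s - of_int k / real l" if "j \<in> {1..r - 2}" for j k
    using that by (simp add: ones_upto_def genv_def)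
  have last2: "?x (r - 1) - of_int k * genv r l a b (r - 1) = - (of_int k * real a / real l)"
    "?x r - of_int k * genv r l a b r = - (of_int k * real b / real l)" for k
    using assms(1) by (auto simp: ones_upto_def genv_def)
  have "(\<forall>j\<in>{1..r}. ?x j - of_int k * genv r l a b j \<in> \<int>) \<longleftrightarrow>
        s - of_int k / real l \<in> \<int> \<and> int l dvd k * int a \<and> int l dvd k * int b" for k
    unfolding coords(1) using diag[of _ k] last2[of k] coords(2)
    by (auto simp: minus_in_Ints_iff of_int_mult_divide_in_Ints_iff[OF assms(2)])
  moreover have "\<forall>j. j \<notin> {1..r} \<longrightarrow> ?x j = 0"
    by (auto simp: ones_upto_def)
  ultimately show ?thesis
    using assms(1) diagonal_scalar_iff[OF assms(2)] by (simp add: mem_NG_iff)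
qed

lemma scaled_evec_mem_NG_iff:
  assumes "3 \<le> r" "p \<in> {r - 1, r}"
  shows "(\<lambda>j. s * evec p j) \<in> NG r l a b \<longleftrightarrow> s \<in> \<int>"
proof
  assume "(\<lambda>j. s * evec p j) \<in> NG r l a b"
  then obtain k :: int where k: "\<forall>j\<in>{1..r}. s * evec p j - of_int k * genv r l a b j \<in> \<int>"
    using assms(1) by (auto simp: mem_NG_iff)
  define c where "c = (if p = r - 1 then a else b)"
  have "p \<noteq> 1" "p \<in> {1..r}" "genv r l a b 1 = 1 / real l" "genv r l a b p = real c / real l"
    using assms by (auto simp: genv_def c_def)
  then have "of_int k / real l \<in> \<int>" and p: "s - of_int k / real l * real c \<in> \<int>"
    using bspec[OF k, of 1] bspec[OF k, of p] assms(1) by (auto simp: evec_def minus_in_Ints_iff)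
  then have "of_int k / real l * real c \<in> \<int>"
    by (intro Ints_mult Ints_of_nat)
  then show "s \<in> \<int>"
    using Ints_add[OF p] by simp
next
  assume "s \<in> \<int>"
  then show "(\<lambda>j. s * evec p j) \<in> NG r l a b"
    using assms by (auto simp: mem_NG_iff evec_def intro!: exI[of _ 0])
qed

lemma scaled_ones_upto_mem_NGbar_iff:
  assumes "3 \<le> r" "0 < l"
  shows "(\<lambda>j. s * ones_upto (r - 2) j) \<in> NGbar r l a b \<longleftrightarrow> s * real (gcd a (gcd b l)) \<in> \<int>"
  using scaled_ones_upto_mem_NG_iff[OF assms] assms(1) by (auto simp: NGbar_def Lsp_def ones_upto_def)

lemma scaled_evec_mem_NGbar_iff:
  assumes "3 \<le> r" "p \<in> {r - 1, r}"
  shows "(\<lambda>j. s * evec p j) \<in> NGbar r l a b \<longleftrightarrow> s \<in> \<int>"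
  using scaled_evec_mem_NG_iff[OF assms] assms by (auto simp: NGbar_def Lsp_def evec_def)

lemma pos_cone_evec:
  "pos_cone (evec ` {1..r}) = {x. (\<forall>j. j \<notin> {1..r} \<longrightarrow> x j = 0) \<and> (\<forall>j. 0 \<le> x j)}"
proof (intro set_eqI iffI)
  fix x assume "x \<in> pos_cone (evec ` {1..r})"
  then obtain S c where S: "S \<subseteq> evec ` {1..r}" "\<forall>v\<in>S. 0 \<le> c v" and x: "x = (\<lambda>j. \<Sum>v\<in>S. c v * v j)"
    unfolding pos_cone_def by blast
  have "0 \<le> x j" for j
    using S by (auto simp: x evec_def intro!: sum_nonneg)
  moreover have "x j = 0" if "j \<notin> {1..r}" for j
    using S(1) that by (auto simp: x evec_def intro!: sum.neutral)
  ultimately show "x \<in> {x. (\<forall>j. j \<notin> {1..r} \<longrightarrow> x j = 0) \<and> (\<forall>j. 0 \<le> x j)}"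
    by blast
next
  fix x :: "nat \<Rightarrow> real"
  assume x: "x \<in> {x. (\<forall>j. j \<notin> {1..r} \<longrightarrow> x j = 0) \<and> (\<forall>j. 0 \<le> x j)}"
  have inj: "inj_on evec {1..r}"
    by (rule inj_onI) (metis evec_def zero_neq_one)
  define c where "c v = (\<Sum>i\<in>{1..r}. v i * x i)" for v :: "nat \<Rightarrow> real"
  have evec_mult: "evec i j * y = (if i = j then y else 0)" "y * evec i j = (if i = j then y else 0)"
    for i j and y :: real
    by (auto simp: evec_def)
  have c_evec: "c (evec i) = x i" if "i \<in> {1..r}" for i
    using that by (simp add: c_def evec_mult)
  have "x j = (\<Sum>v\<in>evec ` {1..r}. c v * v j)" for j
  proof -
    have "(\<Sum>v\<in>evec ` {1..r}. c v * v j) = (\<Sum>i\<in>{1..r}. x i * evec i j)"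
      using sum.reindex[OF inj, of "\<lambda>v. c v * v j"] by (simp add: c_evec)
    then show ?thesis
      using x by (simp add: evec_mult)
  qed
  moreover have "\<forall>v\<in>evec ` {1..r}. 0 \<le> c v"
    using x c_evec by auto
  ultimately show "x \<in> pos_cone (evec ` {1..r})"
    unfolding pos_cone_def by blast
qed

lemma sigma0bar_eq: "sigma0bar r = {x \<in> Lsp r. \<forall>j. 0 \<le> x j}"
  unfolding sigma0bar_def pos_cone_evec Lsp_def by blast

lemma extremal_ray_genI:
  assumes "\<forall>x\<in>\<sigma>. \<forall>j. 0 \<le> x j" "w \<in> \<sigma>" "w \<noteq> (\<lambda>_. 0)"
    and "\<And>x. x \<in> \<sigma> \<Longrightarrow> \<forall>j. w j = 0 \<longrightarrow> x j = 0 \<Longrightarrow> x \<in> ray w"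
  shows "extremal_ray_gen \<sigma> w"
  unfolding extremal_ray_gen_def
proof (intro conjI assms(2,3) ballI impI)
  fix a b assume ab: "a \<in> \<sigma>" "b \<in> \<sigma>" "(\<lambda>j. a j + b j) \<in> ray w"
  then obtain t where t: "(\<lambda>j. a j + b j) = (\<lambda>j. t * w j)"
    unfolding ray_def by blast
  have "a j = 0 \<and> b j = 0" if "w j = 0" for j
  proof -
    have "a j + b j = 0"
      using fun_cong[OF t, of j] that by simp
    then show ?thesis
      using assms(1) ab(1,2) by (simp add: add_nonneg_eq_0_iff)
  qed
  then show "a \<in> ray w" "b \<in> ray w"
    using assms(4) ab(1,2) by auto
qed

lemma restrict_mem_sigma0bar:
  assumes "x \<in> sigma0bar r" "{1..r - 2} \<subseteq> B \<or> B \<inter> {1..r - 2} = {}"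
  shows "(\<lambda>j. if j \<in> B then x j else 0) \<in> sigma0bar r"
proof -
  have x: "\<forall>j. j \<notin> {1..r} \<longrightarrow> x j = 0" "\<forall>i\<in>{1..r - 2}. \<forall>j\<in>{1..r - 2}. x i = x j" "\<forall>j. 0 \<le> x j"
    using assms(1) unfolding sigma0bar_eq Lsp_def by blast+
  have "\<forall>i\<in>{1..r - 2}. \<forall>j\<in>{1..r - 2}. (if i \<in> B then x i else 0) = (if j \<in> B then x j else 0)"
  proof (intro ballI)
    fix i j assume "i \<in> {1..r - 2}" "j \<in> {1..r - 2}"
    then have "x i = x j" "i \<in> B \<longleftrightarrow> j \<in> B"
      using x(2) assms(2) by blast+
    then show "(if i \<in> B then x i else 0) = (if j \<in> B then x j else 0)"
      by simp
  qed
  moreover have "\<forall>j. j \<notin> {1..r} \<longrightarrow> (if j \<in> B then x j else 0) = 0" "\<forall>j. 0 \<le> (if j \<in> B then x j else 0)"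
    using x(1,3) by simp_all
  ultimately show ?thesis
    unfolding sigma0bar_eq Lsp_def by blast
qed

lemma extremal_ray_gen_sigma0bar_support:
  assumes v: "extremal_ray_gen (sigma0bar r) v" and B: "{1..r - 2} \<subseteq> B \<or> B \<inter> {1..r - 2} = {}"
  shows "(\<forall>j. j \<notin> B \<longrightarrow> v j = 0) \<or> (\<forall>j\<in>B. v j = 0)"
proof (rule disjCI)
  assume "\<not> (\<forall>j\<in>B. v j = 0)"
  then obtain j0 where j0: "j0 \<in> B" "v j0 \<noteq> 0" by blast
  let ?a = "\<lambda>j. if j \<in> B then v j else 0" and ?b = "\<lambda>j. if j \<in> - B then v j else 0"
  have v_mem: "v \<in> sigma0bar r"
    and split: "\<And>a b. a \<in> sigma0bar r \<Longrightarrow> b \<in> sigma0bar r \<Longrightarrow> (\<lambda>j. a j + b j) \<in> ray v \<Longrightarrow> a \<in> ray v"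
    using v unfolding extremal_ray_gen_def by blast+
  have "?a \<in> ray v"
  proof (rule split)
    show "?a \<in> sigma0bar r"
      by (rule restrict_mem_sigma0bar[OF v_mem B])
    show "?b \<in> sigma0bar r"
      using B by (intro restrict_mem_sigma0bar[OF v_mem]) blast
    show "(\<lambda>j. ?a j + ?b j) \<in> ray v"
      unfolding ray_def by (auto intro!: exI[of _ 1])
  qed
  then obtain t where t: "(\<lambda>j. if j \<in> B then v j else 0) = (\<lambda>j. t * v j)"
    unfolding ray_def by blast
  have "t = 1"
    using fun_cong[OF t, of j0] j0 by simp
  then show "\<forall>j. j \<notin> B \<longrightarrow> v j = 0"
    using t by (metis mult_1)
qed

lemma extremal_ray_gen_sigma0bar_cases:
  assumes r: "3 \<le> r" and v: "extremal_ray_gen (sigma0bar r) v"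
  obtains c w where "0 < c" "w \<in> {ones_upto (r - 2), evec (r - 1), evec r}" "v = (\<lambda>j. c * w j)"
proof -
  have "v \<in> Lsp r" and nonneg: "\<forall>j. 0 \<le> v j" and "v \<noteq> (\<lambda>_. 0)"
    using v by (auto simp: extremal_ray_gen_def sigma0bar_eq)
  moreover have "1 \<in> {1..r - 2}"
    using r by simp
  ultimately have out: "\<forall>j. j \<notin> {1..r} \<longrightarrow> v j = 0" and eq: "\<forall>i\<in>{1..r - 2}. v i = v 1"
    unfolding Lsp_def by blast+
  have pos: "0 < v j0" if "v = (\<lambda>j. v j0 * w j)" for j0 and w :: "nat \<Rightarrow> real"
    using that nonneg \<open>v \<noteq> (\<lambda>_. 0)\<close> by (metis less_eq_real_def mult_zero_left)
  consider (diagonal) "\<forall>j. j \<notin> {1..r - 2} \<longrightarrow> v j = 0" | (off_diagonal) "\<forall>j\<in>{1..r - 2}. v j = 0"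
    using extremal_ray_gen_sigma0bar_support[OF v, of "{1..r - 2}"] by blast
  then show thesis
  proof cases
    case diagonal
    have "v j = v 1 * ones_upto (r - 2) j" for j
    proof (cases "j \<in> {1..r - 2}")
      case True
      then have "v j = v 1"
        using eq by blast
      with True show ?thesis
        by (simp add: ones_upto_def)
    qed (use diagonal in \<open>auto simp: ones_upto_def\<close>)
    then have v_eq: "v = (\<lambda>j. v 1 * ones_upto (r - 2) j)" ..
    show thesis
      by (rule that[OF pos[OF v_eq] _ v_eq]) simp
  next
    case off_diagonal
    consider (penultimate) "\<forall>j. j \<noteq> r - 1 \<longrightarrow> v j = 0" | (last) "v (r - 1) = 0"
      using extremal_ray_gen_sigma0bar_support[OF v, of "{r - 1}"] r by fastforce
    then show thesis
    proof cases
      case penultimate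
      then have v_eq: "v = (\<lambda>j. v (r - 1) * evec (r - 1) j)"
        by (auto simp: evec_def)
      show thesis
        by (rule that[OF pos[OF v_eq] _ v_eq]) simp
    next
      case last
      have "v j = 0" if "j \<noteq> r" for j
      proof -
        have "j \<in> {1..r - 2} \<or> j = r - 1 \<or> j \<notin> {1..r}"
          using that by auto
        then show ?thesis
          using off_diagonal last out by blast
      qed
      then have v_eq: "v = (\<lambda>j. v r * evec r j)"
        by (auto simp: evec_def)
      show thesis
        by (rule that[OF pos[OF v_eq] _ v_eq]) simp
    qed
  qed
qed

lemma extremal_ray_gen_sigma0bar:
  assumes r: "3 \<le> r" and w: "w \<in> {ones_upto (r - 2), evec (r - 1), evec r}"
  shows "extremal_ray_gen (sigma0bar r) w"
proof (rule extremal_ray_genI)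
  show "\<forall>x\<in>sigma0bar r. \<forall>j. 0 \<le> x j"
    by (simp add: sigma0bar_eq)
  show "w \<in> sigma0bar r"
    using r w by (auto simp: sigma0bar_eq Lsp_def ones_upto_def evec_def)
  show "w \<noteq> (\<lambda>_. 0)"
    using w ones_upto_nonzero[of "r - 2"] evec_nonzero r by force
  fix x assume x: "x \<in> sigma0bar r" and supp: "\<forall>j. w j = 0 \<longrightarrow> x j = 0"
  have "\<exists>j0. \<forall>j. x j = x j0 * w j"
    using w
  proof (elim insertE)
    assume w_def: "w = ones_upto (r - 2)"
    have "x j = x 1 * w j" for j
    proof (cases "j \<in> {1..r - 2}")
      case True
      moreover have "1 \<in> {1..r - 2}"
        using r by simp
      ultimately have "x j = x 1"
        using x unfolding sigma0bar_eq Lsp_def by blast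
      with True show ?thesis
        by (simp add: w_def ones_upto_def)
    qed (use supp w_def in \<open>auto simp: ones_upto_def\<close>)
    then show ?thesis
      by blast
  qed (use supp in \<open>auto simp: evec_def\<close>)
  then have "\<exists>j0. x = (\<lambda>j. x j0 * w j)"
    by blast
  moreover have "\<forall>j. 0 \<le> x j"
    using x by (simp add: sigma0bar_eq)
  ultimately show "x \<in> ray w"
    unfolding ray_def by blast
qed

lemma first_lattice_point_ray_iff:
  assumes c: "0 < c" and q: "0 < q" and w: "w \<noteq> (\<lambda>_. 0)"
    and N: "\<And>s. 0 < s \<Longrightarrow> (\<lambda>j. s * w j) \<in> N \<longleftrightarrow> s * q \<in> \<int>"
  shows "first_lattice_point N (\<lambda>j. c * w j) p \<longleftrightarrow> p = (\<lambda>j. w j / q)"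
proof -
  have mem: "(\<lambda>j. s * (c * w j)) \<in> N - {\<lambda>_. 0} \<longleftrightarrow> s * c * q \<in> \<int>" if "0 < s" for s
  proof -
    have "(\<lambda>j. s * (c * w j)) = (\<lambda>j. (s * c) * w j)"
      by (simp add: mult.assoc)
    moreover have "(\<lambda>j. (s * c) * w j) \<noteq> (\<lambda>_. 0)"
      using w that c by (auto simp: fun_eq_iff)
    ultimately show ?thesis
      using N[of "s * c"] that c by simp
  qed
  let ?t = "1 / (c * q)"
  have t: "0 < ?t" "?t * c * q \<in> \<int>"
    using c q by simp_all
  have least: "?t \<le> s" if "0 < s" "s * c * q \<in> \<int>" for s
    using Ints_nonzero_abs_ge1[OF that(2)] that(1) c q by (simp add: field_simps)
  have "first_lattice_point N (\<lambda>j. c * w j) p \<longleftrightarrow> p = (\<lambda>j. ?t * (c * w j))"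
  proof
    assume "first_lattice_point N (\<lambda>j. c * w j) p"
    then obtain s where s: "0 < s" "p = (\<lambda>j. s * (c * w j))" "p \<in> N - {\<lambda>_. 0}"
      and min: "\<forall>s'>0. (\<lambda>j. s' * (c * w j)) \<in> N - {\<lambda>_. 0} \<longrightarrow> s \<le> s'"
      unfolding first_lattice_point_def by blast
    have "s \<le> ?t"
      using min mem[of ?t] t by blast
    moreover have "?t \<le> s"
      using least mem s by blast
    ultimately show "p = (\<lambda>j. ?t * (c * w j))"
      using s(2) by simp
  next
    assume "p = (\<lambda>j. ?t * (c * w j))"
    then show "first_lattice_point N (\<lambda>j. c * w j) p"
      unfolding first_lattice_point_def using mem t least by blast
  qed
  also have "(\<lambda>j. ?t * (c * w j)) = (\<lambda>j. w j / q)"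
    using c by (simp add: field_simps)
  finally show ?thesis .
qed

lemma first_lattice_point_scaleD:
  assumes "first_lattice_point N v (\<lambda>j. t * v j)" and "v \<noteq> (\<lambda>_. 0)"
  shows "0 < t \<and> (\<lambda>j. t * v j) \<in> N - {\<lambda>_. 0} \<and> (\<forall>s>0. (\<lambda>j. s * v j) \<in> N - {\<lambda>_. 0} \<longrightarrow> t \<le> s)"
proof -
  obtain t' where t': "0 < t'" "(\<lambda>j. t * v j) = (\<lambda>j. t' * v j)" "(\<lambda>j. t * v j) \<in> N - {\<lambda>_. 0}"
    "\<forall>s>0. (\<lambda>j. s * v j) \<in> N - {\<lambda>_. 0} \<longrightarrow> t' \<le> s"
    using assms(1) unfolding first_lattice_point_def by blast
  obtain j where "v j \<noteq> 0"
    using assms(2) by auto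
  then have "t = t'"
    using fun_cong[OF t'(2), of j] by simp
  with t' show ?thesis
    by blast
qed

lemma primitive_generators_sigma0bar:
  assumes r: "3 \<le> r" and q: "0 < q"
    and diag: "\<And>s. 0 < s \<Longrightarrow> (\<lambda>j. s * ones_upto (r - 2) j) \<in> N \<longleftrightarrow> s * q \<in> \<int>"
    and axis: "\<And>p s. p \<in> {r - 1, r} \<Longrightarrow> 0 < s \<Longrightarrow> (\<lambda>j. s * evec p j) \<in> N \<longleftrightarrow> s \<in> \<int>"
  shows "primitive_generators N (sigma0bar r) = {(\<lambda>j. ones_upto (r - 2) j / q), evec (r - 1), evec r}"
proof -
  have diag_flp: "first_lattice_point N (\<lambda>j. c * ones_upto (r - 2) j) p \<longleftrightarrow> p = (\<lambda>j. ones_upto (r - 2) j / q)"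
    if "0 < c" for c p
    using first_lattice_point_ray_iff[OF that q _ diag] ones_upto_nonzero[of "r - 2"] r by simp
  have axis_flp: "first_lattice_point N (\<lambda>j. c * evec k j) p \<longleftrightarrow> p = evec k"
    if "k \<in> {r - 1, r}" "0 < c" for k c p
  proof -
    have "(\<lambda>j. s * evec k j) \<in> N \<longleftrightarrow> s * 1 \<in> \<int>" if "0 < s" for s
      using axis[OF \<open>k \<in> {r - 1, r}\<close> that] by simp
    then show ?thesis
      using first_lattice_point_ray_iff[OF that(2) zero_less_one evec_nonzero] by simp
  qed
  show ?thesis
  proof (intro set_eqI iffI)
    fix p assume "p \<in> primitive_generators N (sigma0bar r)"
    then obtain v where v: "extremal_ray_gen (sigma0bar r) v" and p: "first_lattice_point N v p"
      unfolding primitive_generators_def by blast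
    obtain c w where "0 < c" "w \<in> {ones_upto (r - 2), evec (r - 1), evec r}" "v = (\<lambda>j. c * w j)"
      using extremal_ray_gen_sigma0bar_cases[OF r v] .
    then show "p \<in> {(\<lambda>j. ones_upto (r - 2) j / q), evec (r - 1), evec r}"
      using p diag_flp axis_flp by auto
  next
    fix p assume "p \<in> {(\<lambda>j. ones_upto (r - 2) j / q), evec (r - 1), evec r}"
    then obtain w where "w \<in> {ones_upto (r - 2), evec (r - 1), evec r}" "first_lattice_point N w p"
      using diag_flp[of 1] axis_flp[of _ 1] by auto
    then show "p \<in> primitive_generators N (sigma0bar r)"
      unfolding primitive_generators_def using extremal_ray_gen_sigma0bar[OF r] by blast
  qed
qed

theorem lemma6p11:
  fixes r l \<alpha> \<beta> :: nat
  assumes "r \<ge> 4" and "l \<ge> r" and "\<alpha> + \<beta> = l - (r - 2)"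
  defines "g \<equiv> gcd \<alpha> (gcd \<beta> l)"
    and "d \<equiv> (\<lambda>j. (1 / real (r - 2)) * (\<Sum>i = 1..r - 2. evec i j))"
    and "nG \<equiv> (\<lambda>j. (1 / real (gcd \<alpha> (gcd \<beta> l))) * (\<Sum>i = 1..r - 2. evec i j))"
  shows "first_lattice_point (NGbar r l \<alpha> \<beta>) d nG
     \<and> primitive_generators (NGbar r l \<alpha> \<beta>) (sigma0bar r) = {nG, evec (r - 1), evec r}
     \<and> (real (r - 2) / real g \<in> {\<kappa>. \<kappa> \<in> \<rat> \<and> \<kappa> > 0 \<and> (\<lambda>j. \<kappa> * d j) \<in> NGbar r l \<alpha> \<beta> - {\<lambda>_. 0}}
        \<and> (\<forall>\<kappa>. \<kappa> \<in> \<rat> \<and> \<kappa> > 0 \<and> (\<lambda>j. \<kappa> * d j) \<in> NGbar r l \<alpha> \<beta> - {\<lambda>_. 0}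
              \<longrightarrow> real (r - 2) / real g \<le> \<kappa>))"
proof -
  let ?u = "ones_upto (r - 2)" and ?N = "NGbar r l \<alpha> \<beta>"
  have r: "3 \<le> r" and l: "0 < l" and g: "0 < real g"
    using assms(1,2) by (simp_all add: g_def)
  have d: "d = (\<lambda>j. (1 / real (r - 2)) * ?u j)" and nG: "nG = (\<lambda>j. ?u j / real g)"
    unfolding d_def nG_def g_def sum_evec_eq_ones_upto by simp_all
  have diag: "(\<lambda>j. s * ?u j) \<in> ?N \<longleftrightarrow> s * real g \<in> \<int>" for s
    using scaled_ones_upto_mem_NGbar_iff[OF r l] by (simp add: g_def)
  have "0 < 1 / real (r - 2)" and u: "?u \<noteq> (\<lambda>_. 0)"
    using r by (simp_all add: ones_upto_nonzero)
  then have flp: "first_lattice_point ?N d nG"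
    unfolding d nG using first_lattice_point_ray_iff[OF _ g u diag] by blast
  moreover have "primitive_generators ?N (sigma0bar r) = {nG, evec (r - 1), evec r}"
    unfolding nG using primitive_generators_sigma0bar[OF r g diag scaled_evec_mem_NGbar_iff[OF r]] .
  moreover have "nG = (\<lambda>j. (real (r - 2) / real g) * d j)" and "d \<noteq> (\<lambda>_. 0)"
    using r u unfolding d nG by (auto simp: fun_eq_iff)
  then have "0 < real (r - 2) / real g \<and> (\<lambda>j. (real (r - 2) / real g) * d j) \<in> ?N - {\<lambda>_. 0}
      \<and> (\<forall>s>0. (\<lambda>j. s * d j) \<in> ?N - {\<lambda>_. 0} \<longrightarrow> real (r - 2) / real g \<le> s)"
    using first_lattice_point_scaleD flp by metis
  moreover have "real (r - 2) / real g \<in> \<rat>"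
    by simp
  ultimately show ?thesis
    by blast
qed

end
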